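(* Consider the problem $F^*:=\min_{x\in\mathbb{R}^n} F(x)=\frac1{\ell}\sum_{i=1}^{\ell}f_i(x)+\psi(x)$ s.t. $a_i(x)\le0$, $i=1,\dots,m$, under the standing assumptions in the context, and let $\bar\xi:=\inf_{\lambda^*\in\Lambda^*}\|\lambda^*\|_\infty$. For every $\delta\ge0$ and $\xi>\bar\xi$, a minimizer $x^*_{\xi,\delta}$ of $F_{\xi,\delta}$ satisfies \[-\xi\|\bar A(x^*_{\xi,\delta})\|_1\le F(x^*_{\xi,\delta})-F^*\le m\xi\delta\log2.\] Furthermore, if $\mu>0$, the same inequalities hold also for $\xi=\bar\xi$.
   Context: Standing assumptions: (i) $F$ is $\mu$-strongly convex for some $\mu\ge0$; (ii) each $f_i$ is convex and $L_f$-smooth; (iii) $\psi$ is closed and convex; (iv) each $a_i$ is convex and $L_a$-smooth; (v) (Slater) there exist $s>0$, $\hat x$ with $a_i(\hat x)\le -s$ for all $i$; (vi) there exist $C_0>0$, $C_1\ge0$ with $\|\nabla a_i(x)\|_2^2\le C_0+C_1|a_i(x)|$ for all $x$, $i$. $\Lambda^*$ is the set of optimal dual solutions (KKT multiplier vectors) of the constrained problem. Softplus: $p_\delta(t)=\delta\log(1+\exp(t/\delta))$ for $\delta>0$, $p_0(t)=\max(0,t)$. Penalty reformulation: $F_{\xi,\delta}(x)=F(x)+\xi\sum_{i=1}^m p_\delta(a_i(x))$. $\bar A(x)=(\max(0,a_1(x)),\dots,\max(0,a_m(x)))^T$. *)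

theory Defs
  imports "HOL-Analysis.Analysis"
begin

text \<open>Proper closed convex function represented by its (nonempty) effective domain D
  and its real values on D (value +infinity outside D): closed convex means D convex,
  the function convex on D and the epigraph closed.\<close>
definition proper_closed_convex :: "('a::real_normed_vector) set \<Rightarrow> ('a \<Rightarrow> real) \<Rightarrow> bool" where
  "proper_closed_convex D g \<longleftrightarrow> D \<noteq> {} \<and> convex D \<and> convex_on D g \<and>
     closed {(x, t). x \<in> D \<and> g x \<le> t}"

definition strongly_convex_on :: "real \<Rightarrow> ('a::real_normed_vector) set \<Rightarrow> ('a \<Rightarrow> real) \<Rightarrow> bool" where
  "strongly_convex_on mu D g \<longleftrightarrow> convex D \<and>
     (\<forall>x\<in>D. \<forall>y\<in>D. \<forall>t::real. 0 \<le> t \<and> t \<le> 1 \<longrightarrow>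
        g (t *\<^sub>R x + (1 - t) *\<^sub>R y) \<le> t * g x + (1 - t) * g y - mu / 2 * t * (1 - t) * (norm (x - y))\<^sup>2)"

definition L_smooth :: "real \<Rightarrow> ('a::real_inner \<Rightarrow> real) \<Rightarrow> bool" where
  "L_smooth L g \<longleftrightarrow> (\<exists>G. (\<forall>x. (g has_derivative (\<lambda>h. G x \<bullet> h)) (at x)) \<and>
                          (\<forall>x y. norm (G x - G y) \<le> L * norm (x - y)))"

definition softplus :: "real \<Rightarrow> real \<Rightarrow> real" where
  "softplus \<delta> t = (if \<delta> = 0 then max 0 t else \<delta> * ln (1 + exp (t / \<delta>)))"

definition Fobj :: "nat \<Rightarrow> (nat \<Rightarrow> 'a \<Rightarrow> real) \<Rightarrow> ('a \<Rightarrow> real) \<Rightarrow> 'a \<Rightarrow> real" where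
  "Fobj l f \<psi> x = (1 / real l) * (\<Sum>i<l. f i x) + \<psi> x"

definition Fpen :: "nat \<Rightarrow> (nat \<Rightarrow> 'a \<Rightarrow> real) \<Rightarrow> ('a \<Rightarrow> real) \<Rightarrow> nat \<Rightarrow> (nat \<Rightarrow> 'a \<Rightarrow> real)
                     \<Rightarrow> real \<Rightarrow> real \<Rightarrow> 'a \<Rightarrow> real" where
  "Fpen l f \<psi> m a \<xi> \<delta> x = Fobj l f \<psi> x + \<xi> * (\<Sum>i<m. softplus \<delta> (a i x))"

definition dual_fun :: "'a set \<Rightarrow> ('a \<Rightarrow> real) \<Rightarrow> nat \<Rightarrow> (nat \<Rightarrow> 'a \<Rightarrow> real) \<Rightarrow> (nat \<Rightarrow> real) \<Rightarrow> ereal" where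
  "dual_fun D F m a lam = (INF x\<in>D. ereal (F x + (\<Sum>i<m. lam i * a i x)))"

definition dual_opt_set :: "'a set \<Rightarrow> ('a \<Rightarrow> real) \<Rightarrow> nat \<Rightarrow> (nat \<Rightarrow> 'a \<Rightarrow> real) \<Rightarrow> (nat \<Rightarrow> real) set" where
  "dual_opt_set D F m a = {lam. (\<forall>i<m. 0 \<le> lam i) \<and> (\<forall>i\<ge>m. lam i = 0) \<and>
      (\<forall>lam'. (\<forall>i<m. 0 \<le> lam' i) \<longrightarrow> dual_fun D F m a lam' \<le> dual_fun D F m a lam)}"

definition linf_norm :: "nat \<Rightarrow> (nat \<Rightarrow> real) \<Rightarrow> real" where
  "linf_norm m lam = Max (insert 0 {\<bar>lam i\<bar> | i. i < m})"

text \<open>xi-bar = inf over Lambda^* of the infinity norm (+infinity if Lambda^* is empty).\<close>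
definition xi_bar :: "'a set \<Rightarrow> ('a \<Rightarrow> real) \<Rightarrow> nat \<Rightarrow> (nat \<Rightarrow> 'a \<Rightarrow> real) \<Rightarrow> ereal" where
  "xi_bar D F m a = (INF lam\<in>dual_opt_set D F m a. ereal (linf_norm m lam))"

end

theory Submission
  imports Defs
begin

text \<open>The lower bound is a quantitative form of weak duality. Slater's condition yields a
  Lagrange multiplier for the convex problem, so the optimal dual value is at least \<open>F\<^sup>*\<close>;
  hence every optimal dual solution \<open>\<lambda>\<close> satisfies
  \<open>F\<^sup>* \<le> F x + \<Sum>\<^sub>i \<lambda>\<^sub>i a\<^sub>i(x) \<le> F x + \<parallel>\<lambda>\<parallel>\<^sub>\<infinity> \<Sum>\<^sub>i max 0 (a\<^sub>i(x))\<close>, and taking the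
  infimum over \<open>\<Lambda>\<^sup>*\<close> gives the claim, since both alternatives on \<open>\<xi>\<close> say that \<open>\<xi>\<close> is at
  least this infimum. For the upper bound compare the penalty at its minimizer with the
  penalty at a constrained optimum, where every softplus term is at most \<open>\<delta> log 2\<close>, while
  softplus is nonnegative everywhere. Strong convexity enters only through convexity.\<close>

lemma convex_on_sum_functions:
  fixes g :: "'i \<Rightarrow> 'a::real_vector \<Rightarrow> real"
  assumes "finite I" "convex D" "\<And>i. i \<in> I \<Longrightarrow> convex_on D (g i)"
  shows "convex_on D (\<lambda>x. \<Sum>i\<in>I. g i x)"
  using assms(1,3)
proof (induction I rule: finite_induct)
  case empty
  then show ?case using assms(2) by (simp add: convex_on_const)
next
  case (insert j I)
  then show ?case by (simp add: convex_on_add)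
qed

lemma convex_sublevel_set:
  assumes "convex D" "convex_on D g"
  shows "convex {x\<in>D. g x \<le> c}"
  unfolding convex_alt
proof safe
  fix x y and u :: real
  assume x: "x \<in> D" "g x \<le> c" and y: "y \<in> D" "g y \<le> c" and u: "0 \<le> u" "u \<le> 1"
  show "(1 - u) *\<^sub>R x + u *\<^sub>R y \<in> D" using assms(1) x y u by (simp add: convex_alt)
  have "g ((1 - u) *\<^sub>R x + u *\<^sub>R y) \<le> (1 - u) * g x + u * g y"
    using convex_onD[OF assms(2)] x y u by simp
  also have "\<dots> \<le> (1 - u) * c + u * c"
    using x y u by (intro add_mono mult_left_mono) auto
  finally show "g ((1 - u) *\<^sub>R x + u *\<^sub>R y) \<le> c" by (simp add: algebra_simps)
qed

lemma strongly_convex_on_imp_convex_on: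
  assumes "strongly_convex_on \<mu> D g" "\<mu> \<ge> 0"
  shows "convex_on D g"
proof (rule convex_onI)
  fix t :: real and x y assume t: "0 < t" "t < 1" and xy: "x \<in> D" "y \<in> D"
  have "g (t *\<^sub>R y + (1 - t) *\<^sub>R x)
          \<le> t * g y + (1 - t) * g x - \<mu> / 2 * t * (1 - t) * (norm (y - x))\<^sup>2"
    using assms(1) t xy unfolding strongly_convex_on_def by auto
  moreover have "0 \<le> \<mu> / 2 * t * (1 - t) * (norm (y - x))\<^sup>2" using assms(2) t by auto
  ultimately show "g ((1 - t) *\<^sub>R x + t *\<^sub>R y) \<le> (1 - t) * g x + t * g y"
    by (simp add: add.commute)
next
  show "convex D" using assms(1) by (simp add: strongly_convex_on_def)
qed

text \<open>Interpolating between \<open>y\<close> and \<open>x\<close> gives a point \<open>z\<close> with \<open>g z \<le> 0\<close>, where \<open>c \<le> F z\<close>;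
  convexity of \<open>F\<close> along the segment is the claimed inequality.\<close>
lemma convex_constraint_ratio_le:
  fixes F g :: "'a::real_vector \<Rightarrow> real"
  assumes "convex D" "convex_on D F" "convex_on D g"
    and y: "y \<in> D" "g y > 0" and x: "x \<in> D" "g x < 0"
    and feasible_ge: "\<And>z. z \<in> D \<Longrightarrow> g z \<le> 0 \<Longrightarrow> c \<le> F z"
  shows "(c - F y) / g y \<le> (F x - c) / (- g x)"
proof -
  define t where "t = g y / (g y - g x)"
  have t: "0 \<le> t" "t \<le> 1" using x y by (auto simp: t_def field_simps)
  define z where "z = (1 - t) *\<^sub>R y + t *\<^sub>R x"
  have "z \<in> D" using assms(1) x y t unfolding z_def convex_alt by auto
  have "g z \<le> (1 - t) * g y + t * g x" using convex_onD[OF assms(3)] t x y z_def by auto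
  also have "\<dots> = 0" using x y by (simp add: t_def field_simps)
  finally have "c \<le> F z" using feasible_ge \<open>z \<in> D\<close> by auto
  also have "F z \<le> (1 - t) * F y + t * F x" using convex_onD[OF assms(2)] t x y z_def by auto
  finally have "c * (g y - g x) \<le> ((1 - t) * F y + t * F x) * (g y - g x)"
    using x y by (intro mult_right_mono) auto
  also have "\<dots> = ((1 - t) * (g y - g x)) * F y + (t * (g y - g x)) * F x"
    by (simp add: algebra_simps)
  also have "(1 - t) * (g y - g x) = - g x" using x y by (simp add: t_def field_simps)
  also have "t * (g y - g x) = g y" using x y by (simp add: t_def field_simps)
  finally show ?thesis using x y by (simp add: field_simps)
qed

lemma slater_lagrange_multiplier_single:
  fixes F g :: "'a::real_vector \<Rightarrow> real"
  assumes "convex D" "convex_on D F" "convex_on D g"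
    and slater: "x0 \<in> D" "g x0 < 0"
    and feasible_ge: "\<And>x. x \<in> D \<Longrightarrow> g x \<le> 0 \<Longrightarrow> c \<le> F x"
  shows "\<exists>lam\<ge>0. \<forall>x\<in>D. c \<le> F x + lam * g x"
proof -
  have ratio_le: "(c - F y) / g y \<le> (F x - c) / (- g x)"
    if "y \<in> D" "g y > 0" "x \<in> D" "g x < 0" for x y
    using convex_constraint_ratio_le[OF assms(1-3) that] feasible_ge by blast
  define S where "S = insert 0 {(c - F y) / g y | y. y \<in> D \<and> g y > 0}"
  have bdd: "bdd_above S"
  proof (rule bdd_aboveI)
    fix r assume "r \<in> S"
    then show "r \<le> max 0 ((F x0 - c) / (- g x0))"
      using ratio_le[OF _ _ slater] by (auto simp: S_def intro: le_max_iff_disj[THEN iffD2])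
  qed
  define lam where "lam = Sup S"
  have "0 \<le> lam" unfolding lam_def S_def by (rule cSup_upper) (use bdd S_def in auto)
  moreover have "c \<le> F x + lam * g x" if x: "x \<in> D" for x
  proof (cases "g x" "0::real" rule: linorder_cases)
    case less
    have "0 \<le> (F x - c) / (- g x)"
      using feasible_ge[OF x] less by (intro divide_nonneg_pos) auto
    then have "lam \<le> (F x - c) / (- g x)"
      unfolding lam_def S_def using ratio_le[OF _ _ x less] by (intro cSup_least) auto
    then show ?thesis using less by (simp add: field_simps)
  next
    case equal
    then show ?thesis using feasible_ge x by simp
  next
    case greater
    have "(c - F x) / g x \<le> lam"
      unfolding lam_def using x greater bdd by (intro cSup_upper) (auto simp: S_def)
    then show ?thesis using greater by (simp add: field_simps)
  qed
  ultimately show ?thesis by blast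
qed

text \<open>Multipliers are added one constraint at a time: those for the first \<open>m\<close> constraints
  are found on the set where the last constraint holds, and the last one is then a
  single-constraint multiplier for the partial Lagrangian.\<close>
lemma slater_lagrange_multipliers:
  fixes a :: "nat \<Rightarrow> 'a::real_vector \<Rightarrow> real"
  assumes "convex D" "convex_on D F" "\<And>i. i < m \<Longrightarrow> convex_on D (a i)"
    and "x0 \<in> D" "\<And>i. i < m \<Longrightarrow> a i x0 < 0"
    and "\<And>x. x \<in> D \<Longrightarrow> \<forall>i<m. a i x \<le> 0 \<Longrightarrow> c \<le> F x"
  shows "\<exists>lam. (\<forall>i<m. 0 \<le> lam i) \<and> (\<forall>x\<in>D. c \<le> F x + (\<Sum>i<m. lam i * a i x))"
  using assms
proof (induction m arbitrary: D)
  case 0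
  then show ?case by auto
next
  case (Suc m)
  define D' where "D' = {x\<in>D. a m x \<le> 0}"
  have "convex D'" unfolding D'_def using Suc.prems(1,3) by (intro convex_sublevel_set) auto
  moreover have "D' \<subseteq> D" by (auto simp: D'_def)
  ultimately obtain lam where lam: "\<forall>i<m. 0 \<le> lam i" "\<forall>x\<in>D'. c \<le> F x + (\<Sum>i<m. lam i * a i x)"
    using Suc.IH[of D'] Suc.prems convex_on_subset
    by (fastforce simp: D'_def less_Suc_eq)
  define L where "L x = F x + (\<Sum>i<m. lam i * a i x)" for x
  have "convex_on D L"
    unfolding L_def using Suc.prems lam(1)
    by (intro convex_on_add convex_on_sum_functions convex_on_cmul) auto
  moreover have "c \<le> L x" if "x \<in> D" "a m x \<le> 0" for x
    using lam(2) that by (simp add: L_def D'_def)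
  ultimately obtain \<nu> where "\<nu> \<ge> 0" "\<forall>x\<in>D. c \<le> L x + \<nu> * a m x"
    using slater_lagrange_multiplier_single[OF Suc.prems(1) _ Suc.prems(3)[of m] Suc.prems(4)
        Suc.prems(5)[of m]] by blast
  then show ?case
    using lam(1) by (intro exI[of _ "lam(m := \<nu>)"]) (auto simp: L_def less_Suc_eq)
qed

lemma dual_opt_set_lagrangian_ge:
  assumes "\<forall>i<m. 0 \<le> lam0 i" "\<forall>x\<in>D. c \<le> F x + (\<Sum>i<m. lam0 i * a i x)"
    and "lam \<in> dual_opt_set D F m a" "x \<in> D"
  shows "c \<le> F x + (\<Sum>i<m. lam i * a i x)"
proof -
  have "ereal c \<le> dual_fun D F m a lam0"
    unfolding dual_fun_def using assms(2) by (intro INF_greatest) auto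
  also have "\<dots> \<le> dual_fun D F m a lam"
    using assms(1,3) by (simp add: dual_opt_set_def)
  also have "\<dots> \<le> ereal (F x + (\<Sum>i<m. lam i * a i x))"
    unfolding dual_fun_def using assms(4) by (rule INF_lower)
  finally show ?thesis by simp
qed

lemma abs_le_linf_norm: "i < m \<Longrightarrow> \<bar>lam i\<bar> \<le> linf_norm m lam"
  unfolding linf_norm_def by (intro Max_ge) auto

lemma linf_norm_nonneg: "0 \<le> linf_norm m lam"
  unfolding linf_norm_def by (intro Max_ge) auto

lemma xi_bar_nonneg: "0 \<le> xi_bar D F m a"
  unfolding xi_bar_def using linf_norm_nonneg by (intro INF_greatest) auto

lemma weighted_sum_le_linf_norm_mult_violation:
  assumes "\<forall>i<m. 0 \<le> lam i"
  shows "(\<Sum>i<m. lam i * a i) \<le> linf_norm m lam * (\<Sum>i<m. max 0 (a i))"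
  unfolding sum_distrib_left
proof (rule sum_mono)
  fix i assume "i \<in> {..<m}"
  then have "0 \<le> lam i" "lam i \<le> linf_norm m lam"
    using assms abs_le_linf_norm[of i m lam] by auto
  then have "lam i * a i \<le> lam i * max 0 (a i)" by (intro mult_left_mono) auto
  also have "\<dots> \<le> linf_norm m lam * max 0 (a i)"
    using \<open>lam i \<le> linf_norm m lam\<close> by (intro mult_right_mono) auto
  finally show "lam i * a i \<le> linf_norm m lam * max 0 (a i)" .
qed

lemma le_mult_if_INF_le:
  fixes g :: "'b \<Rightarrow> real"
  assumes "(INF y\<in>A. ereal (g y)) \<le> ereal \<xi>" "0 \<le> S" "\<And>y. y \<in> A \<Longrightarrow> c \<le> g y * S"
  shows "c \<le> \<xi> * S"
proof (cases "S = 0")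
  case True
  have "A \<noteq> {}"
  proof
    assume "A = {}"
    with assms(1) show False by (simp add: top_ereal_def)
  qed
  then show ?thesis using assms(3) True by force
next
  case False
  then have "S > 0" using assms(2) by simp
  have "ereal (c / S) \<le> (INF y\<in>A. ereal (g y))"
    using assms(3) \<open>S > 0\<close> by (intro INF_greatest) (simp add: pos_divide_le_eq)
  also note assms(1)
  finally show ?thesis using \<open>S > 0\<close> by (simp add: pos_divide_le_eq mult.commute)
qed

lemma dual_opt_set_violation_lower_bound:
  assumes "\<forall>i<m. 0 \<le> lam0 i" "\<forall>x\<in>D. c \<le> F x + (\<Sum>i<m. lam0 i * a i x)"
    and "xi_bar D F m a \<le> ereal \<xi>" "x \<in> D"
  shows "c - F x \<le> \<xi> * (\<Sum>i<m. max 0 (a i x))"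
proof -
  have "c - F x \<le> linf_norm m lam * (\<Sum>i<m. max 0 (a i x))"
    if "lam \<in> dual_opt_set D F m a" for lam
  proof -
    have "\<forall>i<m. 0 \<le> lam i" using that by (simp add: dual_opt_set_def)
    from weighted_sum_le_linf_norm_mult_violation[OF this, of "\<lambda>i. a i x"]
    show ?thesis using dual_opt_set_lagrangian_ge[OF assms(1,2) that assms(4)] by linarith
  qed
  from le_mult_if_INF_le[OF assms(3)[unfolded xi_bar_def] _ this]
  show ?thesis by (simp add: sum_nonneg)
qed

lemma softplus_nonneg: "\<delta> \<ge> 0 \<Longrightarrow> 0 \<le> softplus \<delta> t"
  unfolding softplus_def by auto

lemma softplus_nonpos_le: "\<delta> \<ge> 0 \<Longrightarrow> t \<le> 0 \<Longrightarrow> softplus \<delta> t \<le> \<delta> * ln 2"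
proof (cases "\<delta> = 0")
  case False
  assume "\<delta> \<ge> 0" "t \<le> 0"
  then have "\<delta> > 0" "exp (t / \<delta>) \<le> 1" using False by (auto simp: divide_nonpos_pos)
  then have "ln (1 + exp (t / \<delta>)) \<le> ln 2" by (subst ln_le_cancel_iff) (auto simp: add_pos_pos)
  then show ?thesis using \<open>\<delta> > 0\<close> by (simp add: softplus_def)
qed (simp add: softplus_def)

lemma penalty_minimizer_excess_le:
  assumes "\<xi> \<ge> 0" "\<delta> \<ge> 0"
    and "xo \<in> D" "\<forall>i<m. a i xo \<le> 0"
    and "Fpen l f \<psi> m a \<xi> \<delta> xs \<le> Fpen l f \<psi> m a \<xi> \<delta> xo"
  shows "Fobj l f \<psi> xs - Fobj l f \<psi> xo \<le> real m * \<xi> * \<delta> * ln 2"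
proof -
  have "0 \<le> \<xi> * (\<Sum>i<m. softplus \<delta> (a i xs))"
    using assms(1,2) by (intro mult_nonneg_nonneg sum_nonneg softplus_nonneg)
  moreover have "\<xi> * (\<Sum>i<m. softplus \<delta> (a i xo)) \<le> \<xi> * (\<Sum>i<m. \<delta> * ln 2)"
    using assms(1,2,4) by (intro mult_left_mono sum_mono softplus_nonpos_le) auto
  ultimately show ?thesis using assms(5) by (simp add: Fpen_def mult_ac)
qed

theorem proposition1:
  fixes l m :: nat
    and f :: "nat \<Rightarrow> real^'n \<Rightarrow> real"
    and \<psi> :: "real^'n \<Rightarrow> real"
    and D :: "(real^'n) set"
    and a :: "nat \<Rightarrow> real^'n \<Rightarrow> real"
    and ga :: "nat \<Rightarrow> real^'n \<Rightarrow> real^'n"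
    and \<mu> Lf La s C0 C1 Fstar \<xi> \<delta> :: real
    and xhat xs :: "real^'n"
  assumes l_pos: "l \<ge> 1"
    and mu: "\<mu> \<ge> 0"
    and F_sc: "strongly_convex_on \<mu> D (Fobj l f \<psi>)"
    and f_convex: "\<And>i. i < l \<Longrightarrow> convex_on UNIV (f i)"
    and f_smooth: "\<And>i. i < l \<Longrightarrow> L_smooth Lf (f i)"
    and psi_closed_convex: "proper_closed_convex D \<psi>"
    and a_convex: "\<And>i. i < m \<Longrightarrow> convex_on UNIV (a i)"
    and a_grad: "\<And>i x. i < m \<Longrightarrow> (a i has_derivative (\<lambda>h. ga i x \<bullet> h)) (at x)"
    and a_smooth: "\<And>i x y. i < m \<Longrightarrow> norm (ga i x - ga i y) \<le> La * norm (x - y)"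
    and slater: "s > 0" "xhat \<in> D" "\<And>i. i < m \<Longrightarrow> a i xhat \<le> - s"
    and grad_growth: "C0 > 0" "C1 \<ge> 0"
        "\<And>i x. i < m \<Longrightarrow> (norm (ga i x))\<^sup>2 \<le> C0 + C1 * \<bar>a i x\<bar>"
    and Fstar_min: "\<exists>xo\<in>D. (\<forall>i<m. a i xo \<le> 0) \<and> Fobj l f \<psi> xo = Fstar"
        "\<And>x. x \<in> D \<Longrightarrow> (\<forall>i<m. a i x \<le> 0) \<Longrightarrow> Fstar \<le> Fobj l f \<psi> x"
    and delta: "\<delta> \<ge> 0"
    and xi: "xi_bar D (Fobj l f \<psi>) m a < ereal \<xi> \<or>
             (\<mu> > 0 \<and> xi_bar D (Fobj l f \<psi>) m a = ereal \<xi>)"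
    and xs_min: "xs \<in> D" "\<And>y. y \<in> D \<Longrightarrow> Fpen l f \<psi> m a \<xi> \<delta> xs \<le> Fpen l f \<psi> m a \<xi> \<delta> y"
  shows "- \<xi> * (\<Sum>i<m. max 0 (a i xs)) \<le> Fobj l f \<psi> xs - Fstar
         \<and> Fobj l f \<psi> xs - Fstar \<le> real m * \<xi> * \<delta> * ln 2"
proof
  let ?F = "Fobj l f \<psi>"
  have "convex D" using psi_closed_convex by (simp add: proper_closed_convex_def)
  have "convex_on D (a i)" if "i < m" for i
    using convex_on_subset[OF a_convex[OF that] _ \<open>convex D\<close>] by simp
  moreover have "a i xhat < 0" if "i < m" for i using slater(1) slater(3)[OF that] by simp
  ultimately obtain lam0 where
    lam0: "\<forall>i<m. 0 \<le> lam0 i" "\<forall>x\<in>D. Fstar \<le> ?F x + (\<Sum>i<m. lam0 i * a i x)"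
    using slater_lagrange_multipliers[OF \<open>convex D\<close> strongly_convex_on_imp_convex_on[OF F_sc mu]
        _ slater(2) _ Fstar_min(2)] by blast
  have xi_bar_le: "xi_bar D ?F m a \<le> ereal \<xi>" using xi by auto
  from dual_opt_set_violation_lower_bound[OF lam0 xi_bar_le xs_min(1)]
  show "- \<xi> * (\<Sum>i<m. max 0 (a i xs)) \<le> ?F xs - Fstar" by simp
  obtain xo where xo: "xo \<in> D" "\<forall>i<m. a i xo \<le> 0" "?F xo = Fstar" using Fstar_min(1) by blast
  have "0 \<le> \<xi>" using order_trans[OF xi_bar_nonneg xi_bar_le] by simp
  then show "?F xs - Fstar \<le> real m * \<xi> * \<delta> * ln 2"
    using penalty_minimizer_excess_le[OF _ delta xo(1,2) xs_min(2)[OF xo(1)]] xo(3) by simp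
qed

end
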